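(* Let $H$ be a uniform hypergraph and let $\mathcal W$ be a monomial walk with $\operatorname{supp}(\mathcal W)\subseteq E(H)$ and $|\mathcal W|=2n$. If $S$ is a proper splitting set of $\mathcal W$, then there exists a decomposition $(\Gamma_1,S,\Gamma_2)$ of $\mathcal W+S$ such that $|\Gamma_1|<|\mathcal W|$ and $|\Gamma_2|<|\mathcal W|$.
   Context: A hypergraph $H$ has vertex set $V=\{1,\dots,n'\}$ and a set $E(H)$ of edges, each a nonempty subset of $V$ (no repeated edges); it is uniform if all edges have the same size. Multisets of edges: $|M|$ is the size counted with multiplicity; $\operatorname{supp}(M)$ is the set of distinct elements; $M_1\sqcup M_2$ adds multiplicities; $M_1\cap M_2$ takes the minimum of multiplicities; $M_2\subseteq M_1$ means each multiplicity in $M_2$ is at most that in $M_1$; $M_2$ is a proper submultiset of $M_1$ if $M_2\subseteq M_1$ and $M_2\neq M_1$. A balanced edge set $\mathcal E$ is a pair of finite multisets $\mathcal E_{blue},\mathcal E_{red}$ of edges (a bicolored multiset) such that every vertex lies in the same number of blue edges as red edges, counted with multiplicity; its underlying multiset is $\mathcal E_{blue}\sqcup\mathcal E_{red}$, $\operatorname{supp}(\mathcal E)$ is the support of this, and $|\mathcal E|=|\mathcal E_{blue}|+|\mathcal E_{red}|$. When $H$ is uniform a balanced edge set is called a monomial walk. A balanced edge set $\mathcal E$ is reducible with separator $S$ and decomposition $(\Gamma_1,S,\Gamma_2)$ if $S$ is a nonempty multiset with $\operatorname{supp}(S)\subseteq\operatorname{supp}(\mathcal E)$, and there are balanced edge sets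 $\Gamma_1\neq\mathcal E$, $\Gamma_2\neq\mathcal E$ such that $S=\Gamma_{1,red}\cap\Gamma_{2,blue}$, the underlying multiset of $\mathcal E$ equals the sum of the underlying multisets of $\Gamma_1$ and $\Gamma_2$, and $\Gamma_{1,red},\Gamma_{2,red}\subseteq\mathcal E_{red}$ and $\Gamma_{1,blue},\Gamma_{2,blue}\subseteq\mathcal E_{blue}$. The separator is proper with respect to $(\Gamma_1,S,\Gamma_2)$ if $S$ is a proper submultiset of both $\Gamma_{1,red}$ and $\Gamma_{2,blue}$. For a balanced edge set $\mathcal E$ and a multiset $S$ of edges of $H$, $\mathcal E+S$ is the balanced edge set with blue part $\mathcal E_{blue}\sqcup S$ and red part $\mathcal E_{red}\sqcup S$. A nonempty multiset $S$ with $\operatorname{supp}(S)\subseteq E(H)$ is a splitting set of $\mathcal E$ with decomposition $(\Gamma_1,S,\Gamma_2)$ if $\mathcal E+S$ is reducible with separator $S$ and decomposition $(\Gamma_1,S,\Gamma_2)$; it is a proper splitting set of $\mathcal E$ if there is such a decomposition of $\mathcal E+S$ with respect to which $S$ is a proper separator. *)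

theory Defs
  imports Main "HOL-Library.Multiset"
begin

definition hypergraph :: "nat \<Rightarrow> nat set set \<Rightarrow> bool" where
  "hypergraph nv E \<longleftrightarrow> (\<forall>e\<in>E. e \<noteq> {} \<and> e \<subseteq> {1..nv})"

definition uniform :: "nat set set \<Rightarrow> bool" where
  "uniform E \<longleftrightarrow> (\<forall>e\<in>E. \<forall>f\<in>E. card e = card f)"

text \<open>Bicolored multisets of edges: (blue part, red part).\<close>
type_synonym bicol = "nat set multiset \<times> nat set multiset"

definition blue :: "bicol \<Rightarrow> nat set multiset" where "blue G = fst G"
definition red :: "bicol \<Rightarrow> nat set multiset" where "red G = snd G"

definition underlying :: "bicol \<Rightarrow> nat set multiset" where
  "underlying G = blue G + red G"

definition bsize :: "bicol \<Rightarrow> nat" where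
  "bsize G = size (blue G) + size (red G)"

definition deg :: "nat set multiset \<Rightarrow> nat \<Rightarrow> nat" where
  "deg M v = size (filter_mset (\<lambda>e. v \<in> e) M)"

definition balanced :: "nat \<Rightarrow> nat set set \<Rightarrow> bicol \<Rightarrow> bool" where
  "balanced nv E G \<longleftrightarrow> set_mset (blue G) \<subseteq> E \<and> set_mset (red G) \<subseteq> E \<and>
     (\<forall>v\<in>{1..nv}. deg (blue G) v = deg (red G) v)"

definition monomial_walk :: "nat \<Rightarrow> nat set set \<Rightarrow> bicol \<Rightarrow> bool" where
  "monomial_walk nv E G \<longleftrightarrow> uniform E \<and> balanced nv E G"

definition decomposition :: "nat \<Rightarrow> nat set set \<Rightarrow> bicol \<Rightarrow> bicol \<Rightarrow> nat set multiset \<Rightarrow> bicol \<Rightarrow> bool" where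
  "decomposition nv E G G1 S G2 \<longleftrightarrow>
     S \<noteq> {#} \<and> set_mset S \<subseteq> set_mset (underlying G) \<and>
     balanced nv E G1 \<and> balanced nv E G2 \<and> G1 \<noteq> G \<and> G2 \<noteq> G \<and>
     S = red G1 \<inter># blue G2 \<and>
     underlying G = underlying G1 + underlying G2 \<and>
     red G1 \<subseteq># red G \<and> red G2 \<subseteq># red G \<and>
     blue G1 \<subseteq># blue G \<and> blue G2 \<subseteq># blue G"

definition reducible_with :: "nat \<Rightarrow> nat set set \<Rightarrow> bicol \<Rightarrow> nat set multiset \<Rightarrow> bool" where
  "reducible_with nv E G S \<longleftrightarrow> (\<exists>G1 G2. decomposition nv E G G1 S G2)"

definition proper_wrt :: "nat set multiset \<Rightarrow> bicol \<Rightarrow> bicol \<Rightarrow> bool" where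
  "proper_wrt S G1 G2 \<longleftrightarrow> S \<subset># red G1 \<and> S \<subset># blue G2"

definition add_set :: "bicol \<Rightarrow> nat set multiset \<Rightarrow> bicol" where
  "add_set G S = (blue G + S, red G + S)"

definition splitting_set :: "nat \<Rightarrow> nat set set \<Rightarrow> bicol \<Rightarrow> nat set multiset \<Rightarrow> bool" where
  "splitting_set nv E G S \<longleftrightarrow> S \<noteq> {#} \<and> set_mset S \<subseteq> E \<and>
     reducible_with nv E (add_set G S) S"

definition proper_splitting_set :: "nat \<Rightarrow> nat set set \<Rightarrow> bicol \<Rightarrow> nat set multiset \<Rightarrow> bool" where
  "proper_splitting_set nv E G S \<longleftrightarrow> S \<noteq> {#} \<and> set_mset S \<subseteq> E \<and>
     (\<exists>G1 G2. decomposition nv E (add_set G S) G1 S G2 \<and> proper_wrt S G1 G2)"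

end

theory Submission
  imports Defs
begin

text \<open>Double counting vertex-edge incidences shows that in a uniform hypergraph (edges are
  nonempty) a balanced edge set has as many blue as red edges, so its size is twice the size of
  either colour class. A decomposition of \<open>W + S\<close> into \<open>G1\<close> and \<open>G2\<close> satisfies
  \<open>|G1| + |G2| = |W| + 2|S|\<close>, while properness gives \<open>|G1| = 2 |red G1| > 2 |S|\<close> and
  \<open>|G2| = 2 |blue G2| > 2 |S|\<close>; hence both parts are strictly smaller than \<open>W\<close>.\<close>

lemma sum_deg_eq_sum_card:
  assumes "\<forall>e\<in>set_mset M. e \<subseteq> {1..nv}"
  shows "(\<Sum>v\<in>{1..nv}. deg M v) = (\<Sum>e\<in>#M. card e)"
  using assms
proof (induction M)
  case empty
  then show ?case by (simp add: deg_def)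
next
  case (add x M)
  have deg_add: "deg (add_mset x M) v = deg M v + (if v \<in> x then 1 else 0)" for v
    by (simp add: deg_def)
  have "x \<subseteq> {1..nv}" using add.prems by simp
  then have card_x: "(\<Sum>v\<in>{1..nv}. (if v \<in> x then 1 else 0::nat)) = card x"
    by (simp add: sum.If_cases Int_absorb1)
  have "(\<Sum>v\<in>{1..nv}. deg (add_mset x M) v)
      = (\<Sum>v\<in>{1..nv}. deg M v) + (\<Sum>v\<in>{1..nv}. (if v \<in> x then 1 else 0::nat))"
    unfolding deg_add by (rule sum.distrib)
  also have "\<dots> = (\<Sum>e\<in>#M. card e) + card x" using add card_x by simp
  finally show ?case by simp
qed

lemma balanced_size_blue_eq_red:
  assumes "hypergraph nv E" "uniform E" "balanced nv E G"
  shows "size (blue G) = size (red G)"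
proof (cases "E = {}")
  case True
  then show ?thesis using assms(3) by (simp add: balanced_def)
next
  case False
  then obtain f where f: "f \<in> E" by blast
  with assms(1) have "f \<subseteq> {1..nv}" "f \<noteq> {}" by (auto simp: hypergraph_def)
  then have card_pos: "card f > 0" by (simp add: card_gt_0_iff finite_subset)
  have blue_E: "set_mset (blue G) \<subseteq> E" and red_E: "set_mset (red G) \<subseteq> E"
    using assms(3) by (auto simp: balanced_def)
  have card_sum: "(\<Sum>e\<in>#M. card e) = size M * card f" if "set_mset M \<subseteq> E" for M
  proof -
    have "image_mset card M = image_mset (\<lambda>_. card f) M"
      using that f assms(2) unfolding uniform_def by (intro image_mset_cong) blast
    then show ?thesis by simp
  qed
  have within: "\<forall>e\<in>set_mset M. e \<subseteq> {1..nv}" if "set_mset M \<subseteq> E" for M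
    using that assms(1) unfolding hypergraph_def by blast
  have "(\<Sum>e\<in>#blue G. card e) = (\<Sum>v\<in>{1..nv}. deg (blue G) v)"
    using within[OF blue_E] by (rule sum_deg_eq_sum_card[symmetric])
  also have "\<dots> = (\<Sum>v\<in>{1..nv}. deg (red G) v)"
    using assms(3) unfolding balanced_def by (intro sum.cong) simp_all
  also have "\<dots> = (\<Sum>e\<in>#red G. card e)"
    using within[OF red_E] by (rule sum_deg_eq_sum_card)
  finally have "size (blue G) * card f = size (red G) * card f"
    by (simp only: card_sum[OF blue_E] card_sum[OF red_E])
  then show ?thesis using card_pos by simp
qed

lemma balanced_bsize_eq:
  assumes "hypergraph nv E" "uniform E" "balanced nv E G"
  shows "bsize G = 2 * size (red G)" and "bsize G = 2 * size (blue G)"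
  using balanced_size_blue_eq_red[OF assms] by (simp_all add: bsize_def)

lemma bsize_eq_size_underlying: "bsize G = size (underlying G)"
  by (simp add: bsize_def underlying_def)

lemma bsize_add_set: "bsize (add_set G S) = bsize G + 2 * size S"
  by (simp add: bsize_def add_set_def blue_def red_def)

lemma decomposition_bsize:
  assumes "decomposition nv E G G1 S G2"
  shows "bsize G = bsize G1 + bsize G2"
  using assms by (simp add: decomposition_def bsize_eq_size_underlying)

theorem lemma3p5:
  fixes nv n :: nat and E :: "nat set set" and W :: bicol and S :: "nat set multiset"
  assumes "hypergraph nv E" and "uniform E"
    and "monomial_walk nv E W"
    and "set_mset (underlying W) \<subseteq> E"
    and "bsize W = 2 * n"
    and "proper_splitting_set nv E W S"
  shows "\<exists>G1 G2. decomposition nv E (add_set W S) G1 S G2 \<and>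
           bsize G1 < bsize W \<and> bsize G2 < bsize W"
proof -
  obtain G1 G2 where dec: "decomposition nv E (add_set W S) G1 S G2"
    and proper: "proper_wrt S G1 G2"
    using assms(6) unfolding proper_splitting_set_def by blast
  have "balanced nv E G1" "balanced nv E G2"
    using dec by (simp_all add: decomposition_def)
  then have "bsize G1 = 2 * size (red G1)" "bsize G2 = 2 * size (blue G2)"
    using balanced_bsize_eq assms(1,2) by blast+
  moreover have "size S < size (red G1)" "size S < size (blue G2)"
    using proper by (simp_all add: proper_wrt_def mset_subset_size)
  moreover have "bsize W + 2 * size S = bsize G1 + bsize G2"
    using decomposition_bsize[OF dec] by (simp add: bsize_add_set)
  ultimately have "bsize G1 < bsize W" "bsize G2 < bsize W" by linarith+
  then show ?thesis using dec by blast
qed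

end
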